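(* Let $G$ be a connected graph of order $n\ge2$ with maximum degree $\Delta(G)$. Then $\operatorname{ZIR}(G)\le\frac{\Delta(G)}{\Delta(G)+1}\,n$, and this bound is sharp.
   Context: A nonempty $F\subseteq V(G)$ is a fort if every $v\notin F$ has $|N(v)\cap F|\ne1$. A private fort of $x\in S$ relative to $S$ is a fort $F$ with $S\cap F=\{x\}$; $S$ is a ZIr-set if every element of $S$ has a private fort. $\operatorname{ZIR}(G)$ is the maximum cardinality of an inclusion-maximal ZIr-set. *)

theory Defs
  imports Complex_Main
begin

definition simple_graph :: "'a set \<Rightarrow> ('a \<Rightarrow> 'a \<Rightarrow> bool) \<Rightarrow> bool" where
  "simple_graph V E \<longleftrightarrow> finite V \<and> (\<forall>x y. E x y \<longrightarrow> x \<in> V \<and> y \<in> V)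
     \<and> (\<forall>x y. E x y \<longrightarrow> E y x) \<and> (\<forall>x. \<not> E x x)"

definition connected_graph :: "'a set \<Rightarrow> ('a \<Rightarrow> 'a \<Rightarrow> bool) \<Rightarrow> bool" where
  "connected_graph V E \<longleftrightarrow> (\<forall>x\<in>V. \<forall>y\<in>V. E\<^sup>*\<^sup>* x y)"

definition nbhd :: "'a set \<Rightarrow> ('a \<Rightarrow> 'a \<Rightarrow> bool) \<Rightarrow> 'a \<Rightarrow> 'a set" where
  "nbhd V E v = {u \<in> V. E v u}"

definition degree :: "'a set \<Rightarrow> ('a \<Rightarrow> 'a \<Rightarrow> bool) \<Rightarrow> 'a \<Rightarrow> nat" where
  "degree V E v = card (nbhd V E v)"

definition max_degree :: "'a set \<Rightarrow> ('a \<Rightarrow> 'a \<Rightarrow> bool) \<Rightarrow> nat" where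
  "max_degree V E = Max (degree V E ` V)"

definition fort :: "'a set \<Rightarrow> ('a \<Rightarrow> 'a \<Rightarrow> bool) \<Rightarrow> 'a set \<Rightarrow> bool" where
  "fort V E F \<longleftrightarrow> F \<noteq> {} \<and> F \<subseteq> V \<and> (\<forall>v \<in> V - F. card (nbhd V E v \<inter> F) \<noteq> 1)"

definition private_fort :: "'a set \<Rightarrow> ('a \<Rightarrow> 'a \<Rightarrow> bool) \<Rightarrow> 'a set \<Rightarrow> 'a \<Rightarrow> 'a set \<Rightarrow> bool" where
  "private_fort V E S x F \<longleftrightarrow> fort V E F \<and> S \<inter> F = {x}"

definition ZIr_set :: "'a set \<Rightarrow> ('a \<Rightarrow> 'a \<Rightarrow> bool) \<Rightarrow> 'a set \<Rightarrow> bool" where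
  "ZIr_set V E S \<longleftrightarrow> S \<subseteq> V \<and> (\<forall>x \<in> S. \<exists>F. private_fort V E S x F)"

definition maximal_ZIr_set :: "'a set \<Rightarrow> ('a \<Rightarrow> 'a \<Rightarrow> bool) \<Rightarrow> 'a set \<Rightarrow> bool" where
  "maximal_ZIr_set V E S \<longleftrightarrow> ZIr_set V E S \<and> (\<forall>T. ZIr_set V E T \<and> S \<subseteq> T \<longrightarrow> T = S)"

definition ZIR :: "'a set \<Rightarrow> ('a \<Rightarrow> 'a \<Rightarrow> bool) \<Rightarrow> nat" where
  "ZIR V E = Max (card ` {S. maximal_ZIr_set V E S})"

end

theory Submission
  imports Defs
begin

text \<open>Let \<open>S\<close> be a ZIr-set. If some \<open>x \<in> S\<close> had all its neighbours in \<open>S\<close>, pick a neighbour \<open>w\<close>: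
  the private fort of \<open>w\<close> avoids \<open>x\<close> and meets \<open>N(x)\<close> only in \<open>w\<close>, which is impossible for a fort.
  In a connected graph of order at least two every vertex has a neighbour, so \<open>S\<close> is covered by the
  neighbourhoods of the \<open>n - |S|\<close> vertices outside \<open>S\<close>, whence \<open>|S| \<le> \<Delta> (n - |S|)\<close>.
  The complete graph \<open>K\<^sub>n\<close> attains the bound: \<open>V - {v}\<close> is a ZIr-set, the private fort of \<open>x\<close>
  being \<open>{x, v}\<close>.\<close>

lemma simple_graph_edgeD:
  assumes "simple_graph V E" and "E x y"
  shows "x \<in> V" "y \<in> V" "E y x" "x \<noteq> y"
  using assms unfolding simple_graph_def by auto

lemma card_nbhd_le_max_degree:
  assumes "simple_graph V E" and "v \<in> V"
  shows "card (nbhd V E v) \<le> max_degree V E"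
  using assms unfolding max_degree_def degree_def simple_graph_def by (intro Max_ge) auto

lemma connected_graph_has_neighbour:
  assumes "connected_graph V E" and "card V \<ge> 2" and "x \<in> V"
  shows "\<exists>y. E x y"
proof -
  have "\<not> V \<subseteq> {x}" using assms(2) card_mono[of "{x}" V] by auto
  then obtain y where y: "y \<in> V" "y \<noteq> x" by blast
  then have "E\<^sup>*\<^sup>* x y" using assms(1,3) unfolding connected_graph_def by blast
  then show ?thesis using y(2) by (cases rule: converse_rtranclpE) auto
qed

lemma ZIr_set_has_neighbour_outside:
  assumes sg: "simple_graph V E" and Z: "ZIr_set V E S" and x: "x \<in> S" and "E x w"
  shows "\<exists>v. E x v \<and> v \<notin> S"
proof (rule ccontr)
  assume "\<nexists>v. E x v \<and> v \<notin> S"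
  then have nbhd_in_S: "nbhd V E x \<subseteq> S" unfolding nbhd_def by blast
  have "w \<in> S" using nbhd_in_S \<open>E x w\<close> simple_graph_edgeD[OF sg \<open>E x w\<close>] unfolding nbhd_def by blast
  then obtain F where F: "fort V E F" "S \<inter> F = {w}"
    using Z unfolding ZIr_set_def private_fort_def by blast
  have "x \<notin> F" using F(2) x simple_graph_edgeD(4)[OF sg \<open>E x w\<close>] by blast
  have "nbhd V E x \<inter> F = {w}"
    using nbhd_in_S F(2) \<open>E x w\<close> simple_graph_edgeD(2)[OF sg \<open>E x w\<close>] unfolding nbhd_def by blast
  then have "card (nbhd V E x \<inter> F) = 1" by simp
  moreover have "x \<in> V - F" using simple_graph_edgeD(1)[OF sg \<open>E x w\<close>] \<open>x \<notin> F\<close> by blast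
  ultimately show False using F(1) unfolding fort_def by blast
qed

lemma ZIr_set_card_bound:
  assumes sg: "simple_graph V E" and cg: "connected_graph V E" and "card V \<ge> 2"
    and Z: "ZIr_set V E S"
  shows "(max_degree V E + 1) * card S \<le> max_degree V E * card V"
proof -
  let ?D = "max_degree V E"
  have fin: "finite V" using sg unfolding simple_graph_def by simp
  have SV: "S \<subseteq> V" using Z unfolding ZIr_set_def by simp
  have cover: "S \<subseteq> (\<Union>v\<in>V - S. nbhd V E v)"
  proof
    fix x assume x: "x \<in> S"
    obtain w where "E x w" using connected_graph_has_neighbour[OF cg \<open>card V \<ge> 2\<close>] x SV by blast
    then obtain v where v: "E x v" "v \<notin> S" using ZIr_set_has_neighbour_outside[OF sg Z x] by blast
    then show "x \<in> (\<Union>v\<in>V - S. nbhd V E v)"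
      using simple_graph_edgeD[OF sg v(1)] unfolding nbhd_def by blast
  qed
  have "card S \<le> card (\<Union>v\<in>V - S. nbhd V E v)"
    using cover fin by (intro card_mono) (auto simp: nbhd_def)
  also have "\<dots> \<le> (\<Sum>v\<in>V - S. card (nbhd V E v))"
    using fin by (intro card_UN_le) auto
  also have "\<dots> \<le> (\<Sum>v\<in>V - S. ?D)"
    using card_nbhd_le_max_degree[OF sg] by (intro sum_mono) auto
  also have "\<dots> = ?D * (card V - card S)"
    using fin SV by (simp add: card_Diff_subset finite_subset)
  finally have "card S \<le> ?D * (card V - card S)" .
  moreover have "card S \<le> card V" using fin SV by (simp add: card_mono)
  then have "?D * (card V - card S) + ?D * card S = ?D * card V"
    by (metis add_mult_distrib2 le_add_diff_inverse2)
  ultimately show ?thesis by simp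
qed

lemma ZIr_set_finite:
  assumes "simple_graph V E" and "ZIr_set V E S"
  shows "finite S"
  using assms unfolding simple_graph_def ZIr_set_def by (auto intro: finite_subset)

lemma ZIR_attained:
  assumes sg: "simple_graph V E"
  shows "\<exists>S. maximal_ZIr_set V E S \<and> ZIR V E = card S"
    and "maximal_ZIr_set V E S \<Longrightarrow> card S \<le> ZIR V E"
proof -
  have fin: "finite V" using sg unfolding simple_graph_def by simp
  have card_bound: "ZIr_set V E T \<Longrightarrow> card T < Suc (card V)" for T
    using fin unfolding ZIr_set_def by (simp add: card_mono le_imp_less_Suc)
  have "ZIr_set V E {}" unfolding ZIr_set_def by simp
  then obtain S0 where S0: "ZIr_set V E S0" "\<forall>T. ZIr_set V E T \<longrightarrow> card T \<le> card S0"
    using ex_has_greatest_nat[of "ZIr_set V E" "{}" card "Suc (card V)"] card_bound by blast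
  have "maximal_ZIr_set V E S0"
    unfolding maximal_ZIr_set_def
    using S0 ZIr_set_finite[OF sg] by (metis card_seteq)
  then have nonempty: "card ` {S. maximal_ZIr_set V E S} \<noteq> {}" by blast
  have finite_cards: "finite (card ` {S. maximal_ZIr_set V E S})"
    by (rule finite_subset[of _ "{..card V}"])
       (use fin in \<open>auto simp: maximal_ZIr_set_def ZIr_set_def card_mono\<close>)
  show "\<exists>S. maximal_ZIr_set V E S \<and> ZIR V E = card S"
    using Max_in[OF finite_cards nonempty] unfolding ZIR_def by auto
  show "maximal_ZIr_set V E S \<Longrightarrow> card S \<le> ZIR V E"
    unfolding ZIR_def using finite_cards by (intro Max_ge) auto
qed

lemma ZIR_bound:
  assumes "simple_graph V E" and "connected_graph V E" and "card V \<ge> 2"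
  shows "(max_degree V E + 1) * ZIR V E \<le> max_degree V E * card V"
  using ZIR_attained(1)[OF assms(1)] ZIr_set_card_bound[OF assms]
  unfolding maximal_ZIr_set_def by auto

definition complete_graph :: "'a set \<Rightarrow> 'a \<Rightarrow> 'a \<Rightarrow> bool" where
  "complete_graph V x y \<longleftrightarrow> x \<in> V \<and> y \<in> V \<and> x \<noteq> y"

lemma simple_graph_complete_graph: "finite V \<Longrightarrow> simple_graph V (complete_graph V)"
  unfolding simple_graph_def complete_graph_def by auto

lemma connected_graph_complete_graph: "connected_graph V (complete_graph V)"
  unfolding connected_graph_def
  by (metis complete_graph_def r_into_rtranclp rtranclp.rtrancl_refl)

lemma nbhd_complete_graph: "v \<in> V \<Longrightarrow> nbhd V (complete_graph V) v = V - {v}"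
  unfolding nbhd_def complete_graph_def by auto

lemma max_degree_complete_graph:
  assumes "finite V" and "V \<noteq> {}"
  shows "max_degree V (complete_graph V) = card V - 1"
proof -
  have "degree V (complete_graph V) ` V = {card V - 1}"
    using assms by (auto simp: degree_def nbhd_complete_graph)
  then show ?thesis unfolding max_degree_def by simp
qed

lemma ZIr_set_complete_graph_delete_vertex:
  assumes "v \<in> V"
  shows "ZIr_set V (complete_graph V) (V - {v})"
  unfolding ZIr_set_def
proof (intro conjI ballI exI)
  fix x assume x: "x \<in> V - {v}"
  show "private_fort V (complete_graph V) (V - {v}) x {x, v}"
    unfolding private_fort_def fort_def
  proof (intro conjI ballI)
    fix u assume "u \<in> V - {x, v}"
    then have "nbhd V (complete_graph V) u \<inter> {x, v} = {x, v}"
      using x assms by (auto simp: nbhd_complete_graph)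
    then show "card (nbhd V (complete_graph V) u \<inter> {x, v}) \<noteq> 1" using x by auto
  qed (use x assms in auto)
qed (use assms in auto)

lemma ZIR_complete_graph:
  assumes fin: "finite V" and two: "card V \<ge> 2"
  shows "ZIR V (complete_graph V) = card V - 1"
proof -
  let ?K = "complete_graph V"
  have sg: "simple_graph V ?K" using simple_graph_complete_graph[OF fin] .
  note cg = connected_graph_complete_graph[of V]
  have "V \<noteq> {}" using two by auto
  then have \<Delta>: "max_degree V ?K = card V - 1" using max_degree_complete_graph[OF fin] by simp
  have small: "card T \<le> card V - 1" if "ZIr_set V ?K T" for T
  proof -
    have "(card V - 1 + 1) * card T \<le> (card V - 1) * card V"
      using ZIr_set_card_bound[OF sg cg two that] by (simp only: \<Delta>)
    then have "card V * card T \<le> card V * (card V - 1)" using two by (simp add: mult.commute)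
    then show ?thesis using two by simp
  qed
  obtain v where v: "v \<in> V" using \<open>V \<noteq> {}\<close> by blast
  have "maximal_ZIr_set V ?K (V - {v})"
    unfolding maximal_ZIr_set_def
  proof (intro conjI allI impI)
    fix T assume T: "ZIr_set V ?K T \<and> V - {v} \<subseteq> T"
    then show "T = V - {v}"
      using small ZIr_set_finite[OF sg] v fin
      by (metis card_Diff_singleton card_seteq)
  qed (rule ZIr_set_complete_graph_delete_vertex[OF v])
  then have "card V - 1 \<le> ZIR V ?K"
    using ZIR_attained(2)[OF sg] v fin by (metis card_Diff_singleton)
  moreover have "ZIR V ?K \<le> card V - 1"
    using ZIR_attained(1)[OF sg] small unfolding maximal_ZIr_set_def by auto
  ultimately show ?thesis by simp
qed

theorem proposition4p10:
  shows "(\<forall>(V :: 'a set) E. simple_graph V E \<and> connected_graph V E \<and> card V \<ge> 2 \<longrightarrow>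
            real (ZIR V E) \<le> real (max_degree V E) / real (max_degree V E + 1) * real (card V))
       \<and> (\<forall>D::nat. D \<ge> 1 \<longrightarrow> (\<exists>(V :: nat set) E. simple_graph V E \<and> connected_graph V E
            \<and> card V \<ge> 2 \<and> max_degree V E = D
            \<and> real (ZIR V E) = real D / real (D + 1) * real (card V)))"
proof (intro conjI allI impI)
  fix V :: "'a set" and E
  assume "simple_graph V E \<and> connected_graph V E \<and> card V \<ge> 2"
  then have "real (max_degree V E + 1) * real (ZIR V E) \<le> real (max_degree V E) * real (card V)"
    using ZIR_bound by (metis of_nat_le_iff of_nat_mult)
  then show "real (ZIR V E) \<le> real (max_degree V E) / real (max_degree V E + 1) * real (card V)"
    by (simp add: field_simps)
next
  fix D :: nat assume "D \<ge> 1"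
  let ?V = "{0..D}"
  have card_V: "card ?V = D + 1" and two: "card ?V \<ge> 2" using \<open>D \<ge> 1\<close> by auto
  have "max_degree ?V (complete_graph ?V) = D"
    using max_degree_complete_graph[of ?V] card_V by simp
  moreover have "ZIR ?V (complete_graph ?V) = D"
    using ZIR_complete_graph[OF _ two] card_V by simp
  ultimately show "\<exists>(V :: nat set) E. simple_graph V E \<and> connected_graph V E
            \<and> card V \<ge> 2 \<and> max_degree V E = D
            \<and> real (ZIR V E) = real D / real (D + 1) * real (card V)"
    using simple_graph_complete_graph[of ?V] connected_graph_complete_graph[of ?V] two card_V
    by (intro exI[of _ ?V] exI[of _ "complete_graph ?V"]) simp
qed

end
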